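(* For all integers $m$ and $n$, the coefficients $N_{\overline{S}}(m,n)$, $N_{\overline{S}_1}(m,n)$ and $N_{\overline{S}_2}(m,n)$ are nonnegative.
   Context: $(a;q)_\infty=\prod_{k\ge0}(1-aq^k)$. Define \begin{align*} \overline{S}(z,q)&=\sum_{n=1}^\infty\frac{q^n(-q^{n+1};q)_\infty(q^{n+1};q)_\infty}{(zq^n;q)_\infty(z^{-1}q^n;q)_\infty}=\sum_{n\ge1}\sum_mN_{\overline{S}}(m,n)z^mq^n,\\ \overline{S}_1(z,q)&=\sum_{n=0}^\infty\frac{q^{2n+1}(-q^{2n+2};q)_\infty(q^{2n+2};q)_\infty}{(zq^{2n+1};q)_\infty(z^{-1}q^{2n+1};q)_\infty}=\sum_{n\ge1}\sum_mN_{\overline{S}_1}(m,n)z^mq^n,\\ \overline{S}_2(z,q)&=\sum_{n=1}^\infty\frac{q^{2n}(-q^{2n+1};q)_\infty(q^{2n+1};q)_\infty}{(zq^{2n};q)_\infty(z^{-1}q^{2n};q)_\infty}=\sum_{n\ge1}\sum_mN_{\overline{S}_2}(m,n)z^mq^n, \end{align*} the expansions being as formal power series in $q$ with Laurent polynomial coefficients in $z$. *)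

theory Defs
  imports "HOL-Computational_Algebra.Formal_Power_Series"
          "HOL-Computational_Algebra.Formal_Laurent_Series"
begin

(* Formal power series in q (= fps_X) whose coefficients are formal Laurent
   series in z (= fls_X) over the reals.  Laurent polynomials in z form a
   subring of real fls. *)

type_synonym qz = "real fls fps"

definition zvar :: "real fls" where "zvar = fls_X"

(* (a q^k; q)_infinity = prod_{j>=0} (1 - a q^(k+j)), as a q-adic limit *)
definition qpoch_inf :: "real fls \<Rightarrow> nat \<Rightarrow> qz" where
  "qpoch_inf a k = lim (\<lambda>N. \<Prod>j<N. (1 - fps_const a * fps_X ^ (k + j)))"

(* generic summand: q^k (-q^(k+1);q)_inf (q^(k+1);q)_inf / ((z q^k;q)_inf (z^-1 q^k;q)_inf) *)
definition Sterm :: "nat \<Rightarrow> qz" where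
  "Sterm k = fps_X ^ k * qpoch_inf (-1) (k + 1) * qpoch_inf 1 (k + 1)
       * inverse (qpoch_inf zvar k) * inverse (qpoch_inf (inverse zvar) k)"

definition Sbar :: qz where
  "Sbar = lim (\<lambda>N. \<Sum>n\<in>{1..N}. Sterm n)"

definition Sbar1 :: qz where
  "Sbar1 = lim (\<lambda>N. \<Sum>n<N. Sterm (2 * n + 1))"

definition Sbar2 :: qz where
  "Sbar2 = lim (\<lambda>N. \<Sum>n\<in>{1..N}. Sterm (2 * n))"

definition coeff_zq :: "qz \<Rightarrow> int \<Rightarrow> nat \<Rightarrow> real" where
  "coeff_zq F m n = fls_nth (fps_nth F n) m"

definition N_Sbar :: "int \<Rightarrow> nat \<Rightarrow> real" where "N_Sbar m n = coeff_zq Sbar m n"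
definition N_Sbar1 :: "int \<Rightarrow> nat \<Rightarrow> real" where "N_Sbar1 m n = coeff_zq Sbar1 m n"
definition N_Sbar2 :: "int \<Rightarrow> nat \<Rightarrow> real" where "N_Sbar2 m n = coeff_zq Sbar2 m n"

end

theory Submission
  imports Defs
begin

text \<open>
  Pairing the factors of the two numerator products as \<open>(1 + q\<^sup>j)(1 - q\<^sup>j) = 1 - q\<^sup>2\<^sup>j\<close>,
  the \<open>k\<close>-th summand becomes
  \<open>q\<^sup>k / ((1 - z q\<^sup>k)(1 - z\<^sup>-\<^sup>1 q\<^sup>k)) \<cdot> \<Prod>\<^bsub>j>k\<^esub> (1 - q\<^sup>2\<^sup>j) / ((1 - z q\<^sup>j)(1 - z\<^sup>-\<^sup>1 q\<^sup>j))\<close>.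
  Every factor of this product has nonnegative coefficients by the partial fraction identity
  \<open>(1 - q\<^sup>2\<^sup>j) / ((1 - z q\<^sup>j)(1 - z\<^sup>-\<^sup>1 q\<^sup>j)) = 1/(1 - z q\<^sup>j) + 1/(1 - z\<^sup>-\<^sup>1 q\<^sup>j) - 1\<close>,
  whose right-hand side is \<open>1\<close> plus two geometric series with nonnegative coefficients.
  Since each coefficient of \<open>q\<^sup>n\<close> of the infinite products and sums only depends on finitely
  many factors or summands, nonnegativity passes to the \<open>q\<close>-adic limits.
\<close>

unbundle fps_syntax

definition fls_nonneg :: "'a::linordered_idom fls \<Rightarrow> bool" where
  "fls_nonneg a \<longleftrightarrow> (\<forall>m. 0 \<le> a $$ m)"

definition fps_nonneg :: "'a::linordered_idom fls fps \<Rightarrow> bool" where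
  "fps_nonneg F \<longleftrightarrow> (\<forall>n. fls_nonneg (F $ n))"

lemma fls_nonneg_0 [simp]: "fls_nonneg 0"
  and fls_nonneg_1 [simp]: "fls_nonneg 1"
  and fls_nonneg_X [simp]: "fls_nonneg fls_X"
  by (simp_all add: fls_nonneg_def)

lemma fls_nonneg_X_inv [simp]: "fls_nonneg (inverse (fls_X :: 'a::linordered_field fls))"
  by (simp add: fls_nonneg_def fls_inverse_X)

lemma fls_nonneg_add: "fls_nonneg a \<Longrightarrow> fls_nonneg b \<Longrightarrow> fls_nonneg (a + b)"
  by (simp add: fls_nonneg_def)

lemma fls_nonneg_mult: "fls_nonneg a \<Longrightarrow> fls_nonneg b \<Longrightarrow> fls_nonneg (a * b)"
  unfolding fls_nonneg_def by (auto simp: fls_times_nth(2) intro!: sum_nonneg)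

lemma fls_nonneg_sum: "(\<And>i. i \<in> A \<Longrightarrow> fls_nonneg (f i)) \<Longrightarrow> fls_nonneg (sum f A)"
  by (induction A rule: infinite_finite_induct) (auto intro: fls_nonneg_add)

lemma fps_nonneg_0 [simp]: "fps_nonneg 0"
  and fps_nonneg_1 [simp]: "fps_nonneg 1"
  and fps_nonneg_X_power [simp]: "fps_nonneg (fps_X ^ k)"
  by (simp_all add: fps_nonneg_def)

lemma fps_nonneg_const: "fls_nonneg c \<Longrightarrow> fps_nonneg (fps_const c)"
  by (simp add: fps_nonneg_def)

lemma fps_nonneg_add: "fps_nonneg F \<Longrightarrow> fps_nonneg G \<Longrightarrow> fps_nonneg (F + G)"
  by (simp add: fps_nonneg_def fls_nonneg_add)

lemma fps_nonneg_mult: "fps_nonneg F \<Longrightarrow> fps_nonneg G \<Longrightarrow> fps_nonneg (F * G)"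
  unfolding fps_nonneg_def by (auto simp: fps_mult_nth intro!: fls_nonneg_sum fls_nonneg_mult)

lemma fps_nonneg_sum: "(\<And>i. i \<in> A \<Longrightarrow> fps_nonneg (f i)) \<Longrightarrow> fps_nonneg (sum f A)"
  by (induction A rule: infinite_finite_induct) (auto intro: fps_nonneg_add)

lemma fps_nonneg_prod: "(\<And>i. i \<in> A \<Longrightarrow> fps_nonneg (f i)) \<Longrightarrow> fps_nonneg (prod f A)"
  by (induction A rule: infinite_finite_induct) (auto intro: fps_nonneg_mult)

text \<open>The coefficients of \<open>1/(1 - G)\<close> satisfy \<open>H\<^sub>n = \<Sum>\<^bsub>i<n\<^esub> H\<^sub>i G\<^bsub>n-i\<^esub>\<close>, so strong induction applies.\<close>

lemma fps_nonneg_inverse_one_minus: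
  fixes G :: "'a::linordered_field fls fps"
  assumes G: "fps_nonneg G" and G0: "G $ 0 = 0"
  shows "fps_nonneg (inverse (1 - G))"
proof -
  define H where "H = inverse (1 - G)"
  have H_inverse: "H * (1 - G) = 1"
    unfolding H_def by (rule inverse_mult_eq_1) (simp add: G0)
  have "fls_nonneg (H $ n)" for n
  proof (induction n rule: less_induct)
    case (less n)
    show ?case
    proof (cases "n = 0")
      case True
      then show ?thesis by (simp add: H_def G0)
    next
      case False
      have "0 = (H * (1 - G)) $ n" using False by (simp add: H_inverse)
      also have "\<dots> = (\<Sum>i\<in>insert n {0..<n}. H $ i * (1 - G) $ (n - i))"
        unfolding fps_mult_nth by (rule sum.cong) auto
      also have "\<dots> = H $ n - (\<Sum>i<n. H $ i * G $ (n - i))"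
        by (simp add: G0 sum_negf atLeast0LessThan)
      finally have "H $ n = (\<Sum>i<n. H $ i * G $ (n - i))" by simp
      moreover have "fls_nonneg (\<Sum>i<n. H $ i * G $ (n - i))"
        using less G by (auto simp: fps_nonneg_def intro!: fls_nonneg_sum fls_nonneg_mult)
      ultimately show ?thesis by simp
    qed
  qed
  then show ?thesis by (simp add: fps_nonneg_def H_def)
qed

definition fps_agree :: "nat \<Rightarrow> 'a fps \<Rightarrow> 'a fps \<Rightarrow> bool" where
  "fps_agree n F G \<longleftrightarrow> (\<forall>i\<le>n. F $ i = G $ i)"

lemma fps_agree_refl [simp]: "fps_agree n F F"
  by (simp add: fps_agree_def)

lemma fps_agree_add: "fps_agree n F G \<Longrightarrow> fps_agree n H K \<Longrightarrow> fps_agree n (F + H) (G + K)"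
  by (simp add: fps_agree_def)

lemma fps_agree_mult:
  fixes F G H K :: "'a::{comm_monoid_add,times} fps"
  shows "fps_agree n F G \<Longrightarrow> fps_agree n H K \<Longrightarrow> fps_agree n (F * H) (G * K)"
  unfolding fps_agree_def by (auto simp: fps_mult_nth intro!: sum.cong)

lemma fps_agree_inverse:
  fixes F G :: "'a::division_ring fps"
  assumes agree: "fps_agree n F G" and G0: "G $ 0 \<noteq> 0"
  shows "fps_agree n (inverse F) (inverse G)"
proof -
  have F0: "F $ 0 \<noteq> 0" using agree G0 by (simp add: fps_agree_def)
  have "inverse F - inverse G = inverse F * (G * inverse G) - (inverse F * F) * inverse G"
    by (simp add: inverse_mult_eq_1 inverse_mult_eq_1' F0 G0)
  also have "\<dots> = inverse F * (G - F) * inverse G"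
    by (simp add: algebra_simps)
  finally have diff: "inverse F - inverse G = inverse F * (G - F) * inverse G" .
  have "fps_agree n (inverse F * (G - F) * inverse G) (inverse F * 0 * inverse G)"
    using agree by (intro fps_agree_mult) (auto simp: fps_agree_def)
  then have "fps_agree n (inverse F - inverse G) 0" by (simp add: diff)
  then show ?thesis by (simp add: fps_agree_def)
qed

lemma fps_agree_prod_stable:
  fixes a :: "nat \<Rightarrow> 'a::comm_semiring_1 fps"
  assumes "\<And>j. j \<ge> M \<Longrightarrow> fps_agree n (a j) 1" and "M \<le> N"
  shows "fps_agree n (\<Prod>j<N. a j) (\<Prod>j<M. a j)"
  using assms(2)
proof (induction N rule: dec_induct)
  case (step N)
  have "fps_agree n ((\<Prod>j<N. a j) * a N) ((\<Prod>j<M. a j) * 1)"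
    using step assms(1) by (intro fps_agree_mult) auto
  then show ?case by simp
qed simp

lemma fps_agree_lim:
  fixes f :: "nat \<Rightarrow> 'a::group_add fps"
  assumes stable: "\<And>n N. n < N \<Longrightarrow> fps_agree n (f N) (f (Suc n))" and "n < N"
  shows "fps_agree n (lim f) (f N)"
proof -
  define L where "L = Abs_fps (\<lambda>i. f (Suc i) $ i)"
  have L_nth: "L $ i = f N $ i" if "i < N" for i N
    using stable[OF that] by (simp add: L_def fps_agree_def)
  have "f \<longlonglongrightarrow> L"
  proof (rule tendsto_fpsI)
    show "eventually (\<lambda>N. f N $ i = L $ i) sequentially" for i
      by (rule eventually_sequentiallyI[of "Suc i"]) (simp add: L_nth Suc_le_eq)
  qed
  then have "lim f = L" by (rule limI)
  then show ?thesis using \<open>n < N\<close> by (simp add: fps_agree_def L_nth)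
qed

lemma fps_nonneg_if_agree:
  assumes "\<And>n. \<exists>G. fps_agree n F G \<and> fps_nonneg G"
  shows "fps_nonneg F"
  using assms unfolding fps_nonneg_def fps_agree_def by (metis order_refl)

definition qpoch_partial :: "'a::comm_ring_1 \<Rightarrow> nat \<Rightarrow> nat \<Rightarrow> 'a fps" where
  "qpoch_partial a k N = (\<Prod>j<N. 1 - fps_const a * fps_X ^ (k + j))"

lemma qpoch_inf_agree_partial:
  assumes "n < N"
  shows "fps_agree n (qpoch_inf a k) (qpoch_partial a k N)"
proof -
  have "fps_agree n (lim (qpoch_partial a k)) (qpoch_partial a k N)"
  proof (rule fps_agree_lim[OF _ assms])
    show "fps_agree n (qpoch_partial a k N) (qpoch_partial a k (Suc n))" if "n < N" for n N
      unfolding qpoch_partial_def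
      by (rule fps_agree_prod_stable) (use that in \<open>auto simp: fps_agree_def\<close>)
  qed
  then show ?thesis by (simp add: qpoch_inf_def qpoch_partial_def[abs_def])
qed

lemma qpoch_partial_nth_0: "k \<ge> 1 \<Longrightarrow> qpoch_partial a k N $ 0 = 1"
  unfolding qpoch_partial_def by (induction N) auto

definition recip_factor :: "'a::field \<Rightarrow> nat \<Rightarrow> 'a fps" where
  "recip_factor c m = inverse (1 - fps_const c * fps_X ^ m)"

lemma fps_nonneg_recip_factor:
  fixes c :: "'a::linordered_field fls"
  shows "fls_nonneg c \<Longrightarrow> m \<ge> 1 \<Longrightarrow> fps_nonneg (recip_factor c m)"
  unfolding recip_factor_def
  by (rule fps_nonneg_inverse_one_minus) (auto intro!: fps_nonneg_mult fps_nonneg_const)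

lemma recip_factor_partial_fractions:
  fixes c c' :: "'a::field"
  assumes cc': "c * c' = 1" and m: "m \<ge> 1"
  shows "(1 - fps_X ^ (2 * m)) * recip_factor c m * recip_factor c' m
           = recip_factor c m + recip_factor c' m - 1"
proof -
  define a where "a = 1 - fps_const c * fps_X ^ m"
  define b where "b = 1 - fps_const c' * fps_X ^ m"
  have ia: "inverse a * a = 1" and ib: "inverse b * b = 1"
    using m by (auto simp: a_def b_def)
  have "fps_const c * fps_const c' = (1 :: 'a fps)"
    by (simp add: cc' mult.commute[of c'] flip: fps_const_mult)
  moreover have "fps_X ^ (2 * m) = fps_X ^ m * (fps_X ^ m :: 'a fps)"
    by (simp only: mult_2 power_add)
  ultimately have numerator: "1 - fps_X ^ (2 * m) = a + b - a * b"
    unfolding a_def b_def by (simp add: algebra_simps)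
  have "(1 - fps_X ^ (2 * m)) * inverse a * inverse b = (a + b - a * b) * inverse a * inverse b"
    by (simp only: numerator)
  also have "\<dots> = inverse a * (inverse b * b) + inverse b * (inverse a * a)
                     - (inverse a * a) * (inverse b * b)"
    by (simp add: algebra_simps)
  finally show ?thesis by (simp add: ia ib recip_factor_def flip: a_def b_def)
qed

lemma fps_nonneg_recip_factor_pair:
  fixes c c' :: "'a::linordered_field fls"
  assumes "c * c' = 1" "m \<ge> 1" "fls_nonneg c" "fls_nonneg c'"
  shows "fps_nonneg ((1 - fps_X ^ (2 * m)) * recip_factor c m * recip_factor c' m)"
proof -
  have nonneg: "fps_nonneg (recip_factor c m)" "fps_nonneg (recip_factor c' m)"
    using assms by (auto intro: fps_nonneg_recip_factor)
  have "fls_nonneg ((recip_factor c m + recip_factor c' m - 1) $ n)" for n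
  proof (cases "n = 0")
    case True
    then show ?thesis using \<open>m \<ge> 1\<close> by (simp add: recip_factor_def)
  next
    case False
    then show ?thesis using nonneg by (simp add: fps_nonneg_def fls_nonneg_add)
  qed
  then show ?thesis by (simp add: recip_factor_partial_fractions[OF assms(1,2)] fps_nonneg_def)
qed

definition summand_partial :: "'a::field \<Rightarrow> 'a \<Rightarrow> nat \<Rightarrow> nat \<Rightarrow> 'a fps" where
  "summand_partial c c' k N = fps_X ^ k * qpoch_partial (-1) (k + 1) N * qpoch_partial 1 (k + 1) N
     * inverse (qpoch_partial c k (Suc N)) * inverse (qpoch_partial c' k (Suc N))"

lemma summand_partial_eq:
  fixes c c' :: "'a::field"
  shows "summand_partial c c' k N = fps_X ^ k * recip_factor c k * recip_factor c' k
     * (\<Prod>j<N. (1 - fps_X ^ (2 * (k + 1 + j))) * recip_factor c (k + 1 + j) * recip_factor c' (k + 1 + j))"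
proof -
  have numerator: "qpoch_partial (-1 :: 'a) (k + 1) N * qpoch_partial 1 (k + 1) N
      = (\<Prod>j<N. 1 - fps_X ^ (2 * (k + 1 + j)))"
  proof -
    have pair: "(1 - fps_const (-1) * y) * (1 - fps_const 1 * y) = 1 - y * (y :: 'a fps)" for y
      by (simp add: algebra_simps flip: fps_const_neg)
    have square: "fps_X ^ (2 * i) = fps_X ^ i * (fps_X ^ i :: 'a fps)" for i
      by (simp only: mult_2 power_add)
    show ?thesis
      unfolding qpoch_partial_def prod.distrib[symmetric]
      by (rule prod.cong) (simp_all only: pair square add.assoc)
  qed
  have denominator: "inverse (qpoch_partial (d :: 'a) k (Suc N)) = recip_factor d k * (\<Prod>j<N. recip_factor d (k + 1 + j))"
    for d
    unfolding qpoch_partial_def inverse_prod_fps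
    by (subst prod.lessThan_Suc_shift) (simp add: recip_factor_def)
  show ?thesis
    unfolding summand_partial_def mult.assoc[of "fps_X ^ k"] numerator[unfolded mult.assoc]
      mult.assoc denominator
    by (simp add: prod.distrib ac_simps)
qed

lemma Sterm_agree_summand_partial:
  assumes "k \<ge> 1"
  shows "fps_agree n (Sterm k) (summand_partial zvar (inverse zvar) k (Suc n))"
  unfolding Sterm_def summand_partial_def
  by (intro fps_agree_mult fps_agree_inverse qpoch_inf_agree_partial fps_agree_refl)
    (simp_all add: qpoch_partial_nth_0[OF assms])

lemma Sterm_nonneg:
  assumes "k \<ge> 1"
  shows "fps_nonneg (Sterm k)"
proof (rule fps_nonneg_if_agree)
  have zvar_inverse: "zvar * inverse zvar = 1"
    by (simp add: zvar_def)
  have "fps_nonneg (summand_partial zvar (inverse zvar) k N)" for N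
    unfolding summand_partial_eq
    by (intro fps_nonneg_prod fps_nonneg_recip_factor_pair fps_nonneg_mult fps_nonneg_recip_factor
        fps_nonneg_X_power) (use assms zvar_inverse in \<open>auto simp: zvar_def\<close>)
  then show "\<exists>G. fps_agree n (Sterm k) G \<and> fps_nonneg G" for n
    using Sterm_agree_summand_partial[OF assms] by blast
qed

lemma Sterm_nth_below: "i < k \<Longrightarrow> Sterm k $ i = 0"
  unfolding Sterm_def mult.assoc by (simp add: fps_X_power_mult_nth)

lemma fps_nonneg_lim_sum:
  fixes U :: "nat \<Rightarrow> 'a::linordered_idom fls fps"
  assumes nonneg: "\<And>j. fps_nonneg (U j)" and below: "\<And>j i. i < j \<Longrightarrow> U j $ i = 0"
  shows "fps_nonneg (lim (\<lambda>N. \<Sum>j<N. U j))"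
proof (rule fps_nonneg_if_agree)
  define f where "f N = (\<Sum>j<N. U j)" for N
  have stable: "fps_agree n (f N) (f (Suc n))" if "n < N" for n N
  proof -
    have "Suc n \<le> N" using that by simp
    then show ?thesis
    proof (induction N rule: dec_induct)
      case (step N)
      have "fps_agree n (f N + U N) (f (Suc n) + 0)"
        using step below by (intro fps_agree_add) (auto simp: fps_agree_def)
      then show ?case by (simp add: f_def)
    qed simp
  qed
  show "\<exists>G. fps_agree n (lim (\<lambda>N. \<Sum>j<N. U j)) G \<and> fps_nonneg G" for n
  proof (intro exI conjI)
    show "fps_agree n (lim (\<lambda>N. \<Sum>j<N. U j)) (f (Suc n))"
      using fps_agree_lim[OF stable, of n "Suc n"] by (simp add: f_def[abs_def])
    show "fps_nonneg (f (Suc n))"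
      unfolding f_def by (intro fps_nonneg_sum nonneg)
  qed
qed

lemma Sbar_nonneg: "fps_nonneg Sbar"
proof -
  have shifted: "Sbar = lim (\<lambda>N. \<Sum>j<N. Sterm (Suc j))"
    unfolding Sbar_def by (simp add: sum.atLeast1_atMost_eq)
  show ?thesis unfolding shifted by (auto intro!: fps_nonneg_lim_sum Sterm_nonneg Sterm_nth_below)
qed

lemma Sbar1_nonneg: "fps_nonneg Sbar1"
  unfolding Sbar1_def by (auto intro!: fps_nonneg_lim_sum Sterm_nonneg Sterm_nth_below)

lemma Sbar2_nonneg: "fps_nonneg Sbar2"
proof -
  have shifted: "Sbar2 = lim (\<lambda>N. \<Sum>j<N. Sterm (2 * Suc j))"
    unfolding Sbar2_def by (simp only: One_nat_def sum.atLeast1_atMost_eq)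
  show ?thesis unfolding shifted by (auto intro!: fps_nonneg_lim_sum Sterm_nonneg Sterm_nth_below)
qed

theorem theorem2p16:
  fixes m :: int and n :: nat
  shows "N_Sbar m n \<ge> 0 \<and> N_Sbar1 m n \<ge> 0 \<and> N_Sbar2 m n \<ge> 0"
  using Sbar_nonneg Sbar1_nonneg Sbar2_nonneg
  by (simp add: N_Sbar_def N_Sbar1_def N_Sbar2_def coeff_zq_def fps_nonneg_def fls_nonneg_def)

end
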